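(* $\mathsf{AUC}_{[0,1]}\not\le_W *\text{-}\mathsf{WWKL}$.
   Context: A represented space is a pair $(X,\delta_X)$ with $\delta_X:\subseteq\mathbb{N}^\mathbb{N}\to X$ a partial surjection; $[0,1]$ carries its Cauchy representation. A realizer of $f:\subseteq X\rightrightarrows Y$ is a partial $F$ with $\delta_Y F(p)\in f(\delta_X(p))$ for all $p\in\mathrm{dom}(f\circ\delta_X)$. $f\le_W g$ if there are computable partial $H,K:\subseteq\mathbb{N}^\mathbb{N}\to\mathbb{N}^\mathbb{N}$ such that $p\mapsto H\langle p,GK(p)\rangle$ realizes $f$ for every realizer $G$ of $g$. $\mathcal{A}_-([0,1])$ denotes the closed subsets of $[0,1]$ represented by negative information (a name of $A$ enumerates rational open intervals whose union is $[0,1]\setminus A$). $\mathsf C_{[0,1]}:\subseteq\mathcal A_-([0,1])\rightrightarrows[0,1]$, $A\mapsto A$, is defined on nonempty $A$. All-or-unique choice $\mathsf{AUC}_{[0,1]}$ is $\mathsf C_{[0,1]}$ restricted to the sets $[0,1]$ and $\{x\}$, $x\in[0,1]$. $\mathrm{Tr}$ is the set of binary trees $T\subseteq\{0,1\}^*$, represented by characteristic functions; $[T]$ its set of infinite paths; $\mu$ the uniform measure on $2^\mathbb N$ ($\mu(w2^\mathbb N)=2^{-|w|}$). $*\text{-}\mathsf{WWKL}:\subseteq\mathbb N\times\mathrm{Tr}\rightrightarrows2^\mathbb N$, $(n,T)\mapsto[T]$, has domain $\{(n,T):\mu([T])>2^{-n}\}$. *)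

theory Defs
  imports "HOL-Probability.Probability" "HOL-Library.Nat_Bijection"
begin

datatype recf = RZero | RSuc | RProj nat | RComp recf "recf list" | RPrec recf recf | RMu recf

inductive rec_eval :: "recf \<Rightarrow> nat list \<Rightarrow> nat \<Rightarrow> bool" where
  zero: "rec_eval RZero xs 0"
| suc: "rec_eval RSuc (x # xs) (Suc x)"
| proj: "i < length xs \<Longrightarrow> rec_eval (RProj i) xs (xs ! i)"
| comp: "length ys = length gs \<Longrightarrow> (\<forall>i < length gs. rec_eval (gs ! i) xs (ys ! i))
          \<Longrightarrow> rec_eval f ys z \<Longrightarrow> rec_eval (RComp f gs) xs z"
| prec0: "rec_eval f xs y \<Longrightarrow> rec_eval (RPrec f g) (0 # xs) y"
| precS: "rec_eval (RPrec f g) (n # xs) y \<Longrightarrow> rec_eval g (n # y # xs) z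
          \<Longrightarrow> rec_eval (RPrec f g) (Suc n # xs) z"
| mu: "rec_eval f (n # xs) 0 \<Longrightarrow> (\<forall>m < n. \<exists>v. rec_eval f (m # xs) v \<and> 0 < v)
          \<Longrightarrow> rec_eval (RMu f) xs n"

definition total_computable :: "(nat \<Rightarrow> nat) \<Rightarrow> bool" where
  "total_computable a \<longleftrightarrow> (\<exists>e. \<forall>x. rec_eval e [x] (a x))"

type_synonym baire = "nat \<Rightarrow> nat"

definition assoc_fun :: "(nat \<Rightarrow> nat) \<Rightarrow> baire \<Rightarrow> baire option" where
  "assoc_fun a p =
     (if (\<forall>n. \<exists>k. 0 < a (prod_encode (n, list_encode (map p [0..<k]))))
      then Some (\<lambda>n. a (prod_encode (n, list_encode (map p
                   [0..<(LEAST k. 0 < a (prod_encode (n, list_encode (map p [0..<k]))))]))) - 1)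
      else None)"

definition computable_partial :: "(baire \<Rightarrow> baire option) \<Rightarrow> bool" where
  "computable_partial F \<longleftrightarrow>
     (\<exists>a. total_computable a \<and> (\<forall>p q. F p = Some q \<longrightarrow> assoc_fun a p = Some q))"

definition bpair :: "baire \<Rightarrow> baire \<Rightarrow> baire" where
  "bpair p q = (\<lambda>n. if even n then p (n div 2) else q (n div 2))"

definition bfst :: "baire \<Rightarrow> baire" where "bfst r = (\<lambda>n. r (2 * n))"
definition bsnd :: "baire \<Rightarrow> baire" where "bsnd r = (\<lambda>n. r (2 * n + 1))"

text \<open>A (partial, multi-valued) problem f :<= X =>> Y on represented spaces is given by
  representations dX, dY (partial surjections from Baire space), its domain D and its values f.\<close>
definition realizes ::
  "(baire \<Rightarrow> 'a option) \<Rightarrow> (baire \<Rightarrow> 'b option) \<Rightarrow> 'a set \<Rightarrow> ('a \<Rightarrow> 'b set)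
     \<Rightarrow> (baire \<Rightarrow> baire option) \<Rightarrow> bool" where
  "realizes dX dY D f F \<longleftrightarrow>
     (\<forall>p x. dX p = Some x \<and> x \<in> D \<longrightarrow> (\<exists>q y. F p = Some q \<and> dY q = Some y \<and> y \<in> f x))"

definition weihrauch_le ::
  "(baire \<Rightarrow> 'a option) \<Rightarrow> (baire \<Rightarrow> 'b option) \<Rightarrow> 'a set \<Rightarrow> ('a \<Rightarrow> 'b set)
   \<Rightarrow> (baire \<Rightarrow> 'c option) \<Rightarrow> (baire \<Rightarrow> 'd option) \<Rightarrow> 'c set \<Rightarrow> ('c \<Rightarrow> 'd set) \<Rightarrow> bool" where
  "weihrauch_le dX dY Df f dU dV Dg g \<longleftrightarrow>
     (\<exists>H K. computable_partial H \<and> computable_partial K \<and>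
        (\<forall>G. realizes dU dV Dg g G \<longrightarrow>
           realizes dX dY Df f
             (\<lambda>p. case K p of None \<Rightarrow> None
                  | Some r \<Rightarrow> (case G r of None \<Rightarrow> None | Some s \<Rightarrow> H (bpair p s)))))"

definition nu :: "nat \<Rightarrow> real" where
  "nu n = (case prod_decode n of (a, b) \<Rightarrow> real_of_int (int_decode a) / real (Suc b))"

definition delta_unit :: "baire \<Rightarrow> real option" where
  "delta_unit p = (if \<exists>x \<in> {0..1}. \<forall>i. \<bar>nu (p i) - x\<bar> \<le> (1/2) ^ i
                   then Some (THE x. x \<in> {0..1} \<and> (\<forall>i. \<bar>nu (p i) - x\<bar> \<le> (1/2) ^ i))
                   else None)"

text \<open>Negative information: p(n) = 0 means no interval, p(n) = k+1 lists the rational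
  open interval (nu a, nu b) where (a,b) = prod_decode k; the named set is [0,1] minus the union.\<close>
definition enum_intervals :: "baire \<Rightarrow> real set" where
  "enum_intervals p = (\<Union>n \<in> {n. 0 < p n}.
      (case prod_decode (p n - 1) of (a, b) \<Rightarrow> {nu a <..< nu b}))"

definition delta_closed :: "baire \<Rightarrow> real set option" where
  "delta_closed p = Some ({0..1} - enum_intervals p)"

definition AUC_dom :: "real set set" where
  "AUC_dom = {{0..1}} \<union> {{x} | x. x \<in> {0..1}}"

text \<open>Binary words: bijection nat -> bool list (node m has children 2m+1 (False) and 2m+2 (True)).\<close>
fun word_of_nat :: "nat \<Rightarrow> bool list" where
  "word_of_nat 0 = []"
| "word_of_nat (Suc n) = word_of_nat (n div 2) @ [odd n]"

definition is_tree :: "bool list set \<Rightarrow> bool" where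
  "is_tree T \<longleftrightarrow> (\<forall>w v. w @ v \<in> T \<longrightarrow> w \<in> T)"

definition delta_tree :: "baire \<Rightarrow> bool list set option" where
  "delta_tree q = (if (\<forall>n. q n \<le> 1) \<and> is_tree {word_of_nat n | n. q n = 1}
                   then Some {word_of_nat n | n. q n = 1} else None)"

definition delta_nat_tree :: "baire \<Rightarrow> (nat \<times> bool list set) option" where
  "delta_nat_tree r = (case delta_tree (bsnd r) of None \<Rightarrow> None
                        | Some T \<Rightarrow> Some (bfst r 0, T))"

definition delta_cantor :: "baire \<Rightarrow> (nat \<Rightarrow> bool) option" where
  "delta_cantor q = (if \<forall>n. q n \<le> 1 then Some (\<lambda>n. q n = 1) else None)"

definition paths :: "bool list set \<Rightarrow> (nat \<Rightarrow> bool) set" where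
  "paths T = {f. \<forall>n. map f [0..<n] \<in> T}"

definition cantor_measure :: "(nat \<Rightarrow> bool) measure" where
  "cantor_measure = PiM UNIV (\<lambda>_. measure_pmf (bernoulli_pmf (1/2)))"

definition star_WWKL_dom :: "(nat \<times> bool list set) set" where
  "star_WWKL_dom = {(n, T). is_tree T \<and> measure cantor_measure (paths T) > (1/2) ^ n}"

definition star_WWKL :: "nat \<times> bool list set \<Rightarrow> (nat \<Rightarrow> bool) set" where
  "star_WWKL x = paths (snd x)"

end

theory Submission
  imports Defs
begin

text \<open>Suppose \<open>H\<close> and \<open>K\<close> reduce all-or-unique choice to \<open>*-WWKL\<close>. On the name of \<open>[0,1]\<close>,
  \<open>K\<close> produces an instance \<open>(n, T)\<close> with \<open>\<mu>[T] > 2^-n\<close>. On each path of \<open>T\<close>, \<open>H\<close> must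
  output a \<open>2^-(n+3)\<close>-approximation of a point, which rules out all but at most one of the
  \<open>N = 2^(n+1)\<close> grid points \<open>i/N\<close>. Hence some grid point \<open>x\<close> is left open only on a set of
  paths of measure at most \<open>1/N < 2^-n\<close>, and by continuity of measure this is already
  witnessed at a finite level \<open>l\<close> of \<open>T\<close>. A name of \<open>{x}\<close> that agrees long enough with the
  name of \<open>[0,1]\<close> makes \<open>K\<close> output an instance \<open>(n, T')\<close> with the same levels up to \<open>l\<close>;
  as \<open>\<mu>[T'] > 2^-n\<close>, some path of \<open>T'\<close> is one on which \<open>H\<close> has already ruled out \<open>x\<close>,
  although it must name \<open>x\<close>.\<close>

section \<open>Cantor space\<close>

interpretation cantor: prob_space cantor_measure
  unfolding cantor_measure_def by (rule prob_space_PiM) (simp add: prob_space_measure_pmf)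

lemma space_cantor_measure [simp]: "space cantor_measure = UNIV"
  unfolding cantor_measure_def by (simp add: space_PiM)

lemma sets_cantor_measure_coordinate: "{s. s j = b} \<in> sets cantor_measure"
proof -
  have "(\<lambda>s. s j) \<in> measurable cantor_measure (measure_pmf (bernoulli_pmf (1/2)))"
    unfolding cantor_measure_def by (rule measurable_component_singleton) simp
  from measurable_sets[OF this, of "{b}"] show ?thesis
    by (simp add: vimage_def)
qed

lemma sets_cantor_measure_prefix: "{s. P (map s [0..<k])} \<in> sets cantor_measure"
proof -
  have "{s. P (map s [0..<k])} = (\<Union>w\<in>{w. P w \<and> length w = k}. \<Inter>j<k. {s. s j = w ! j})"
  proof (intro set_eqI iffI)
    fix s assume "s \<in> (\<Union>w\<in>{w. P w \<and> length w = k}. \<Inter>j<k. {s. s j = w ! j})"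
    then obtain w where w: "P w" "length w = k" "\<And>j. j < k \<Longrightarrow> s j = w ! j" by auto
    then have "map s [0..<k] = w" by (intro nth_equalityI) auto
    with w show "s \<in> {s. P (map s [0..<k])}" by simp
  next
    fix s assume "s \<in> {s. P (map s [0..<k])}"
    then show "s \<in> (\<Union>w\<in>{w. P w \<and> length w = k}. \<Inter>j<k. {s. s j = w ! j})"
      by (intro UN_I[of "map s [0..<k]"]) auto
  qed
  moreover have "(\<Inter>j<k. {s. s j = w ! j}) \<in> sets cantor_measure" for w :: "bool list"
    by (cases "k = 0") (auto intro: sets_cantor_measure_coordinate simp: sets.top[of cantor_measure, simplified])
  ultimately show ?thesis
    by (auto intro!: sets.countable_UN'')
qed

lemma sets_cantor_measure_finitely_determined:
  assumes "\<And>s s'. \<forall>j<M. s j = s' j \<Longrightarrow> s \<in> S \<Longrightarrow> s' \<in> S"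
  shows "S \<in> sets cantor_measure"
proof -
  define extend :: "bool list \<Rightarrow> nat \<Rightarrow> bool" where "extend w j = (j < length w \<and> w ! j)" for w j
  have agree: "\<forall>j<M. s j = extend (map s [0..<M]) j" for s
    by (simp add: extend_def)
  have eq: "S = {s. extend (map s [0..<M]) \<in> S}"
  proof (intro set_eqI iffI)
    fix s assume "s \<in> S"
    from assms[OF agree this] show "s \<in> {s. extend (map s [0..<M]) \<in> S}"
      by simp
  next
    fix s assume "s \<in> {s. extend (map s [0..<M]) \<in> S}"
    moreover have "\<forall>j<M. extend (map s [0..<M]) j = s j"
      using agree[of s] by simp
    ultimately show "s \<in> S"
      using assms[of "extend (map s [0..<M])" s] by simp
  qed
  show ?thesis
    by (subst eq) (rule sets_cantor_measure_prefix)
qed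

lemma tree_prefix:
  assumes "is_tree T" "map s [0..<l'] \<in> T" "l \<le> l'"
  shows "map s [0..<l] \<in> T"
proof -
  have "map s [0..<l'] = map s [0..<l] @ map s [l..<l']"
    using \<open>l \<le> l'\<close> by (metis map_append le_add_diff_inverse upt_add_eq_append zero_le)
  with assms(1,2) show ?thesis
    unfolding is_tree_def by metis
qed

lemma paths_eq_INT: "paths T = (\<Inter>l. {s. map s [0..<l] \<in> T})"
  unfolding paths_def by auto

lemma sets_cantor_measure_paths: "paths T \<in> sets cantor_measure"
  unfolding paths_eq_INT by (auto intro: sets_cantor_measure_prefix)

lemma (in prob_space) ex_prob_le_inverse_card:
  assumes "disjoint_family_on D {..<N}" "\<And>i. i < N \<Longrightarrow> D i \<in> events" "0 < N"
  obtains i where "i < N" "prob (D i) \<le> 1 / real N"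
proof (rule ccontr)
  assume "\<not> thesis"
  with that have "1 / real N < prob (D i)" if "i < N" for i
    using \<open>i < N\<close> by (meson not_le)
  then have "(\<Sum>i<N. 1 / real N) < (\<Sum>i<N. prob (D i))"
    using \<open>0 < N\<close> by (intro sum_strict_mono) auto
  also have "\<dots> = prob (\<Union>i<N. D i)"
    using assms(1,2) by (intro finite_measure_finite_Union[symmetric]) auto
  also have "\<dots> \<le> 1"
    by (rule prob_le_1)
  finally show False
    using \<open>0 < N\<close> by simp
qed

lemma (in prob_space) ex_prob_less_of_decseq:
  assumes "range E \<subseteq> events" "decseq E" "prob (\<Inter>l. E l) < c"
  obtains l where "prob (E l) < c"
proof -
  have "(\<lambda>l. prob (E l)) \<longlonglongrightarrow> prob (\<Inter>l. E l)"
    by (rule finite_Lim_measure_decseq[OF assms(1,2)])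
  from order_tendstoD(2)[OF this assms(3)] that show ?thesis
    by (auto simp: eventually_sequentially)
qed

lemma (in finite_measure) meets_of_measure_diff_less:
  assumes "A \<subseteq> C" "C - F \<in> sets M" "measure M (C - F) < measure M A"
  obtains s where "s \<in> A" "s \<in> F"
proof (rule ccontr)
  assume "\<not> thesis"
  with that assms(1) have "A \<subseteq> C - F"
    by blast
  from finite_measure_mono[OF this assms(2)] assms(3) show False
    by simp
qed

section \<open>Associates\<close>

definition assoc_query :: "(nat \<Rightarrow> nat) \<Rightarrow> nat \<Rightarrow> baire \<Rightarrow> nat \<Rightarrow> nat" where
  "assoc_query a n p k = a (prod_encode (n, list_encode (map p [0..<k])))"

definition assoc_digit :: "(nat \<Rightarrow> nat) \<Rightarrow> nat \<Rightarrow> baire \<Rightarrow> nat \<Rightarrow> nat option" where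
  "assoc_digit a n p L =
     (if \<exists>k\<le>L. 0 < assoc_query a n p k
      then Some (assoc_query a n p (LEAST k. 0 < assoc_query a n p k) - 1) else None)"

lemma assoc_fun_eq:
  "assoc_fun a p =
     (if \<forall>n. \<exists>k. 0 < assoc_query a n p k
      then Some (\<lambda>n. assoc_query a n p (LEAST k. 0 < assoc_query a n p k) - 1) else None)"
  unfolding assoc_fun_def assoc_query_def ..

lemma assoc_query_prefix:
  assumes "\<forall>i<k. p i = p' i"
  shows "assoc_query a n p k = assoc_query a n p' k"
proof -
  from assms have "map p [0..<k] = map p' [0..<k]"
    by simp
  then show ?thesis
    by (simp only: assoc_query_def)
qed

lemma Least_cong_bounded:
  fixes P Q :: "nat \<Rightarrow> bool"
  assumes PQ: "\<And>k. k \<le> L \<Longrightarrow> P k \<longleftrightarrow> Q k" and "P k0" "k0 \<le> L"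
  shows "(LEAST k. Q k) = (LEAST k. P k)"
proof (rule Least_equality)
  have "(LEAST k. P k) \<le> L"
    using Least_le[of P, OF \<open>P k0\<close>] \<open>k0 \<le> L\<close> by simp
  moreover have "P (LEAST k. P k)"
    using \<open>P k0\<close> by (rule LeastI)
  ultimately show "Q (LEAST k. P k)"
    using PQ by blast
  fix k assume "Q k"
  show "(LEAST k. P k) \<le> k"
  proof (rule ccontr)
    assume "\<not> (LEAST k. P k) \<le> k"
    with \<open>(LEAST k. P k) \<le> L\<close> \<open>Q k\<close> PQ[of k] have "P k" "k < (LEAST k. P k)"
      by auto
    then show False
      using not_less_Least by blast
  qed
qed

lemma assoc_digit_prefix:
  assumes "\<forall>i<L. p i = p' i"
  shows "assoc_digit a n p L = assoc_digit a n p' L"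
proof -
  have eq: "assoc_query a n p k = assoc_query a n p' k" if "k \<le> L" for k
    using assms that by (intro assoc_query_prefix) auto
  show ?thesis
  proof (cases "\<exists>k\<le>L. 0 < assoc_query a n p k")
    case True
    then obtain k0 where k0: "0 < assoc_query a n p k0" "k0 \<le> L" by blast
    have least: "(LEAST k. 0 < assoc_query a n p' k) = (LEAST k. 0 < assoc_query a n p k)"
      by (rule Least_cong_bounded[where P = "\<lambda>k. 0 < assoc_query a n p k", OF _ k0]) (simp add: eq)
    have "(LEAST k. 0 < assoc_query a n p k) \<le> L"
      using Least_le[of "\<lambda>k. 0 < assoc_query a n p k" k0] k0 by simp
    with True eq show ?thesis
      unfolding assoc_digit_def least by auto
  qed (simp add: assoc_digit_def eq)
qed

lemma assoc_digit_mono: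
  assumes "assoc_digit a n p L = Some d" "L \<le> L'"
  shows "assoc_digit a n p L' = Some d"
proof -
  from assms(1) obtain k where "k \<le> L" "0 < assoc_query a n p k"
    and d: "d = assoc_query a n p (LEAST k. 0 < assoc_query a n p k) - 1"
    unfolding assoc_digit_def by (auto split: if_splits)
  with assms(2) have "\<exists>k\<le>L'. 0 < assoc_query a n p k"
    by (intro exI[of _ k]) simp
  with d show ?thesis
    unfolding assoc_digit_def by simp
qed

lemma assoc_fun_digit:
  assumes "assoc_fun a p = Some q"
  obtains L where "assoc_digit a n p L = Some (q n)"
proof -
  from assms obtain k where "0 < assoc_query a n p k"
    and "q n = assoc_query a n p (LEAST k. 0 < assoc_query a n p k) - 1"
    unfolding assoc_fun_eq by (auto split: if_splits)
  then have "assoc_digit a n p k = Some (q n)"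
    unfolding assoc_digit_def by (simp add: exI[of _ k])
  then show ?thesis
    by (rule that)
qed

lemma assoc_fun_digit_eq:
  "assoc_fun a p = Some q \<Longrightarrow> assoc_digit a n p L = Some d \<Longrightarrow> q n = d"
  unfolding assoc_fun_eq assoc_digit_def by (auto split: if_splits)

lemma assoc_fun_continuous:
  assumes "assoc_fun a p = Some q"
  obtains L where "\<forall>p' q'. (\<forall>i<L. p' i = p i) \<longrightarrow> assoc_fun a p' = Some q' \<longrightarrow> (\<forall>j<J. q' j = q j)"
proof (induction J arbitrary: thesis)
  case 0
  then show ?case by blast
next
  case (Suc J)
  obtain L1 where L1: "\<forall>p' q'. (\<forall>i<L1. p' i = p i) \<longrightarrow> assoc_fun a p' = Some q' \<longrightarrow> (\<forall>j<J. q' j = q j)"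
    using Suc.IH .
  obtain L2 where L2: "assoc_digit a J p L2 = Some (q J)"
    using assoc_fun_digit[OF assms] .
  show ?case
  proof (rule Suc.prems[of "max L1 L2"], intro allI impI)
    fix p' q' j
    assume agree: "\<forall>i<max L1 L2. p' i = p i" and q': "assoc_fun a p' = Some q'" and "j < Suc J"
    then consider "j < J" | "j = J"
      by linarith
    then show "q' j = q j"
    proof cases
      case 1
      from agree have "\<forall>i<L1. p' i = p i"
        by simp
      with L1 q' have "\<forall>j<J. q' j = q j"
        by blast
      with 1 show ?thesis
        by blast
    next
      case 2
      from agree have "\<forall>i<L2. p' i = p i"
        by simp
      with L2 have "assoc_digit a J p' L2 = Some (q J)"
        using assoc_digit_prefix[of L2 p' p] by simp
      with assoc_fun_digit_eq[OF q'] 2 show ?thesis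
        by blast
    qed
  qed
qed

lemma computable_partial_assoc:
  assumes "computable_partial F"
  obtains a where "\<And>p q. F p = Some q \<Longrightarrow> assoc_fun a p = Some q"
  using assms unfolding computable_partial_def by blast

section \<open>Representations and realizers\<close>

lemma LIMSEQ_of_dyadic_approx:
  fixes f :: "nat \<Rightarrow> real"
  assumes "\<And>i. \<bar>f i - x\<bar> \<le> (1/2) ^ i"
  shows "f \<longlonglongrightarrow> x"
proof -
  have "(\<lambda>i. f i - x) \<longlonglongrightarrow> 0"
    by (rule Lim_null_comparison[where g = "\<lambda>i. (1/2) ^ i"])
      (use assms in \<open>auto intro: LIMSEQ_realpow_zero\<close>)
  then show ?thesis
    by (simp add: LIM_zero_iff)
qed

lemma delta_unit_SomeD:
  assumes "delta_unit q = Some y"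
  shows "y \<in> {0..1}" and "\<bar>nu (q i) - y\<bar> \<le> (1/2) ^ i"
proof -
  from assms obtain x where x: "x \<in> {0..1}" "\<forall>i. \<bar>nu (q i) - x\<bar> \<le> (1/2) ^ i"
    and y: "y = (THE x. x \<in> {0..1} \<and> (\<forall>i. \<bar>nu (q i) - x\<bar> \<le> (1/2) ^ i))"
    unfolding delta_unit_def by (auto split: if_splits)
  have "y = x"
    unfolding y
  proof (rule the_equality)
    fix x' assume "x' \<in> {0..1} \<and> (\<forall>i. \<bar>nu (q i) - x'\<bar> \<le> (1/2) ^ i)"
    then have "(\<lambda>i. nu (q i)) \<longlonglongrightarrow> x'"
      by (intro LIMSEQ_of_dyadic_approx) blast
    moreover have "(\<lambda>i. nu (q i)) \<longlonglongrightarrow> x"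
      using x(2) by (intro LIMSEQ_of_dyadic_approx) blast
    ultimately show "x' = x"
      by (rule LIMSEQ_unique)
  qed (use x in blast)
  with x show "y \<in> {0..1}" "\<bar>nu (q i) - y\<bar> \<le> (1/2) ^ i"
    by auto
qed

lemma nu_prod_encode: "nu (prod_encode (int_encode z, b)) = of_int z / real (Suc b)"
  unfolding nu_def by simp

lemma word_of_nat_inj: "word_of_nat m = word_of_nat m' \<Longrightarrow> m = m'"
proof (induction m arbitrary: m' rule: less_induct)
  case (less m)
  show ?case
  proof (cases m)
    case 0
    with less.prems show ?thesis by (cases m') auto
  next
    case (Suc n)
    with less.prems obtain n' where m': "m' = Suc n'" by (cases m') auto
    with less.prems Suc have "word_of_nat (n div 2) = word_of_nat (n' div 2)" "odd n = odd n'"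
      by auto
    with less.IH[of "n div 2"] Suc have "n div 2 = n' div 2" "odd n = odd n'"
      by auto
    then have "n = n'"
      by (metis div_mult_mod_eq odd_iff_mod_2_eq_one not_mod_2_eq_1_eq_0)
    with Suc m' show ?thesis by simp
  qed
qed

lemma word_of_nat_surj: "\<exists>m. word_of_nat m = w \<and> Suc m < 2 ^ Suc (length w)"
proof (induction w rule: rev_induct)
  case (snoc b w)
  then obtain m where m: "word_of_nat m = w" "Suc m < 2 ^ Suc (length w)" by blast
  define m' where "m' = Suc (2 * m + (if b then 1 else 0))"
  have "word_of_nat m' = w @ [b]" "Suc m' < 2 ^ Suc (length (w @ [b]))"
    using m unfolding m'_def by auto
  then show ?case by blast
qed (auto intro: exI[of _ 0])

lemma delta_nat_tree_SomeD:
  "delta_nat_tree r = Some (n, T) \<Longrightarrow> n = r 0 \<and> T = {word_of_nat m | m. r (2 * m + 1) = 1}"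
  unfolding delta_nat_tree_def delta_tree_def bfst_def bsnd_def
  by (auto split: option.splits if_splits)

lemma delta_nat_tree_mem:
  "delta_nat_tree r = Some (n, T) \<Longrightarrow> word_of_nat m \<in> T \<longleftrightarrow> r (2 * m + 1) = 1"
  using delta_nat_tree_SomeD[of r n T] word_of_nat_inj by auto

text \<open>Words of length at most \<open>l\<close> have codes \<open>m < 2^(l+1)\<close>; their membership bits sit at
  the positions \<open>2m + 1 < 2^(l+2)\<close>.\<close>
lemma delta_nat_tree_prefix:
  assumes r: "delta_nat_tree r = Some (n, T)" and r': "delta_nat_tree r' = Some (n', T')"
    and agree: "\<forall>j<2 ^ (l + 2). r' j = r j"
  shows "n' = n" and "length w \<le> l \<Longrightarrow> w \<in> T' \<longleftrightarrow> w \<in> T"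
proof -
  show "n' = n"
    using agree delta_nat_tree_SomeD[OF r] delta_nat_tree_SomeD[OF r'] by simp
  assume "length w \<le> l"
  obtain m where m: "word_of_nat m = w" "Suc m < 2 ^ Suc (length w)"
    using word_of_nat_surj by blast
  have "(2::nat) ^ Suc (length w) \<le> 2 ^ Suc l"
    using \<open>length w \<le> l\<close> by (intro power_increasing) auto
  with m(2) have "2 * m + 1 < 2 * 2 ^ Suc l"
    by linarith
  then have "2 * m + 1 < 2 ^ (l + 2)"
    by simp
  then have "r' (2 * m + 1) = r (2 * m + 1)"
    using agree by blast
  then show "w \<in> T' \<longleftrightarrow> w \<in> T"
    unfolding m(1)[symmetric] delta_nat_tree_mem[OF r] delta_nat_tree_mem[OF r'] by simp
qed

lemma delta_closed_zero: "delta_closed (\<lambda>_. 0) = Some {0..1}"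
  unfolding delta_closed_def enum_intervals_def by simp

text \<open>From position \<open>M\<close> on, enumerate the two intervals \<open>(-1, nu c)\<close> and \<open>(nu c, 2)\<close>.\<close>
definition singleton_name :: "nat \<Rightarrow> nat \<Rightarrow> baire" where
  "singleton_name M c j =
     (if j = M then Suc (prod_encode (prod_encode (int_encode (-1), 0), c))
      else if j = Suc M then Suc (prod_encode (c, prod_encode (int_encode 2, 0))) else 0)"

lemma singleton_name_below: "j < M \<Longrightarrow> singleton_name M c j = 0"
  unfolding singleton_name_def by simp

lemma delta_closed_singleton_name:
  assumes "nu c \<in> {0..1}"
  shows "delta_closed (singleton_name M c) = Some {nu c}"
proof -
  have "{j. 0 < singleton_name M c j} = {M, Suc M}"
    by (auto simp: singleton_name_def)
  then have "enum_intervals (singleton_name M c) = {-1<..<nu c} \<union> {nu c<..<2}"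
    unfolding enum_intervals_def by (simp add: singleton_name_def nu_prod_encode)
  with assms show ?thesis
    unfolding delta_closed_def by auto
qed

lemma AUC_dom_unit: "{0..1} \<in> AUC_dom"
  and AUC_dom_singleton: "x \<in> {0..1} \<Longrightarrow> {x} \<in> AUC_dom"
  unfolding AUC_dom_def by auto

definition cantor_name :: "(nat \<Rightarrow> bool) \<Rightarrow> baire" where
  "cantor_name s j = (if s j then 1 else 0)"

lemma delta_cantor_cantor_name [simp]: "delta_cantor (cantor_name s) = Some s"
  unfolding delta_cantor_def cantor_name_def by auto

lemma star_WWKL_nonempty: "x \<in> star_WWKL_dom \<Longrightarrow> star_WWKL x \<noteq> {}"
proof
  assume "x \<in> star_WWKL_dom" "star_WWKL x = {}"
  then obtain n T where "(1/2::real) ^ n < measure cantor_measure (paths T)" "paths T = {}"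
    unfolding star_WWKL_dom_def star_WWKL_def by auto
  then show False
    by simp
qed

definition star_WWKL_realizer :: "baire \<Rightarrow> baire option" where
  "star_WWKL_realizer r =
     (case delta_nat_tree r of
        None \<Rightarrow> None
      | Some x \<Rightarrow> if x \<in> star_WWKL_dom then Some (cantor_name (SOME s. s \<in> star_WWKL x)) else None)"

lemma realizes_star_WWKL_realizer:
  "realizes delta_nat_tree delta_cantor star_WWKL_dom star_WWKL star_WWKL_realizer"
  unfolding realizes_def star_WWKL_realizer_def
  using star_WWKL_nonempty by (auto simp: some_in_eq)

lemma star_WWKL_realizer_SomeD:
  "star_WWKL_realizer r = Some z \<Longrightarrow> \<exists>x. delta_nat_tree r = Some x \<and> x \<in> star_WWKL_dom"
  unfolding star_WWKL_realizer_def by (auto split: option.splits if_splits)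

lemma realizes_star_WWKL_realizer_update:
  assumes "delta_nat_tree r = Some x" "s \<in> star_WWKL x"
  shows "realizes delta_nat_tree delta_cantor star_WWKL_dom star_WWKL
           (star_WWKL_realizer(r := Some (cantor_name s)))"
  using realizes_star_WWKL_realizer assms unfolding realizes_def by auto

lemma bpair_prefix:
  "\<forall>j<M. p j = p' j \<Longrightarrow> \<forall>j<M. s j = s' j \<Longrightarrow> \<forall>j<2 * M. bpair p s j = bpair p' s' j"
  unfolding bpair_def by auto

text \<open>The paths \<open>s\<close> on which \<open>a\<close>, applied to the name of \<open>[0,1]\<close> paired with \<open>s\<close>, has
  committed to a \<open>k\<close>-th output digit that rules out \<open>x\<close> after reading \<open>M\<close> symbols of each.\<close>
definition excluding_paths :: "(nat \<Rightarrow> nat) \<Rightarrow> nat \<Rightarrow> real \<Rightarrow> nat \<Rightarrow> (nat \<Rightarrow> bool) set" where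
  "excluding_paths a k x M =
     {s. \<exists>d. assoc_digit a k (bpair (\<lambda>_. 0) (cantor_name s)) (2 * M) = Some d
            \<and> (1/2) ^ k < \<bar>nu d - x\<bar>}"

lemma excluding_paths_mono: "M \<le> M' \<Longrightarrow> excluding_paths a k x M \<subseteq> excluding_paths a k x M'"
  unfolding excluding_paths_def using assoc_digit_mono[of a k _ "2 * M" _ "2 * M'"] by fastforce

lemma sets_excluding_paths: "excluding_paths a k x M \<in> sets cantor_measure"
proof (rule sets_cantor_measure_finitely_determined)
  fix s s' :: "nat \<Rightarrow> bool" assume "\<forall>j<M. s j = s' j"
  then have "\<forall>j<2 * M. bpair (\<lambda>_. 0) (cantor_name s) j = bpair (\<lambda>_. 0) (cantor_name s') j"
    by (intro bpair_prefix) (auto simp: cantor_name_def)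
  then have "assoc_digit a k (bpair (\<lambda>_. 0) (cantor_name s)) (2 * M)
      = assoc_digit a k (bpair (\<lambda>_. 0) (cantor_name s')) (2 * M)"
    by (rule assoc_digit_prefix)
  then show "s \<in> excluding_paths a k x M \<Longrightarrow> s' \<in> excluding_paths a k x M"
    unfolding excluding_paths_def by simp
qed

lemma excluding_paths_excludes:
  assumes "s \<in> excluding_paths a k x M" "\<forall>j<M. p j = 0"
    and "assoc_fun a (bpair p (cantor_name s)) = Some q" "delta_unit q = Some y"
  shows "y \<noteq> x"
proof
  assume "y = x"
  from assms(1) obtain d where d: "assoc_digit a k (bpair (\<lambda>_. 0) (cantor_name s)) (2 * M) = Some d"
    and far: "(1/2) ^ k < \<bar>nu d - x\<bar>"
    unfolding excluding_paths_def by blast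
  have "\<forall>j<2 * M. bpair p (cantor_name s) j = bpair (\<lambda>_. 0) (cantor_name s) j"
    using assms(2) by (intro bpair_prefix) auto
  then have "assoc_digit a k (bpair p (cantor_name s)) (2 * M)
      = assoc_digit a k (bpair (\<lambda>_. 0) (cantor_name s)) (2 * M)"
    by (rule assoc_digit_prefix)
  with d have "assoc_digit a k (bpair p (cantor_name s)) (2 * M) = Some d"
    by simp
  then have "q k = d"
    using assoc_fun_digit_eq[OF assms(3)] by blast
  with delta_unit_SomeD(2)[OF assms(4), of k] far \<open>y = x\<close> show False
    by simp
qed

section \<open>No continuous reduction\<close>

locale continuous_reduction =
  fixes H K :: "baire \<Rightarrow> baire option" and aH aK :: "nat \<Rightarrow> nat"
  assumes H_assoc: "H p = Some q \<Longrightarrow> assoc_fun aH p = Some q"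
    and K_assoc: "K p = Some r \<Longrightarrow> assoc_fun aK p = Some r"
    and reduction: "realizes delta_nat_tree delta_cantor star_WWKL_dom star_WWKL G \<Longrightarrow>
      realizes delta_closed delta_unit AUC_dom (\<lambda>A. A)
        (\<lambda>p. case K p of None \<Rightarrow> None
             | Some r \<Rightarrow> (case G r of None \<Rightarrow> None | Some s \<Rightarrow> H (bpair p s)))"
begin

lemma reduction_defined:
  assumes "realizes delta_nat_tree delta_cantor star_WWKL_dom star_WWKL G"
    and "delta_closed p = Some A" "A \<in> AUC_dom"
  obtains r s q y where "K p = Some r" "G r = Some s" "H (bpair p s) = Some q"
    "delta_unit q = Some y" "y \<in> A"
proof -
  from reduction[OF assms(1)] assms(2,3) obtain q y
    where "(case K p of None \<Rightarrow> None
            | Some r \<Rightarrow> (case G r of None \<Rightarrow> None | Some s \<Rightarrow> H (bpair p s))) = Some q"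
      and "delta_unit q = Some y" "y \<in> A"
    unfolding realizes_def by blast
  with that show ?thesis
    by (auto split: option.splits)
qed

lemma instance_of_name:
  assumes "delta_closed p = Some A" "A \<in> AUC_dom"
  obtains r n T where "K p = Some r" "delta_nat_tree r = Some (n, T)" "(n, T) \<in> star_WWKL_dom"
proof -
  obtain r s where "K p = Some r" "star_WWKL_realizer r = Some s"
    using reduction_defined[OF realizes_star_WWKL_realizer assms] by blast
  moreover obtain x where "delta_nat_tree r = Some x" "x \<in> star_WWKL_dom"
    using star_WWKL_realizer_SomeD[OF \<open>star_WWKL_realizer r = Some s\<close>] by blast
  ultimately show ?thesis
    using that by (cases x) auto
qed

lemma answer_on_path:
  assumes "delta_closed p = Some A" "A \<in> AUC_dom"
    and "K p = Some r" "delta_nat_tree r = Some x" "s \<in> star_WWKL x"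
  obtains q y where "assoc_fun aH (bpair p (cantor_name s)) = Some q" "delta_unit q = Some y" "y \<in> A"
proof -
  obtain r' s' q y where "K p = Some r'" "(star_WWKL_realizer(r := Some (cantor_name s))) r' = Some s'"
    "H (bpair p s') = Some q" "delta_unit q = Some y" "y \<in> A"
    by (rule reduction_defined[OF realizes_star_WWKL_realizer_update[OF assms(4,5)] assms(1,2)])
  with assms(3) that show ?thesis
    by (auto dest: H_assoc)
qed

text \<open>A \<open>2^-k\<close>-approximation cannot be \<open>2^-k\<close>-close to two points more than \<open>2 \<cdot> 2^-k\<close> apart.\<close>
lemma path_excludes_one_of:
  assumes "K (\<lambda>_. 0) = Some r" "delta_nat_tree r = Some x" "s \<in> star_WWKL x"
    and sep: "2 * (1/2) ^ k < \<bar>x1 - x2\<bar>"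
  shows "(\<exists>M. s \<in> excluding_paths aH k x1 M) \<or> (\<exists>M. s \<in> excluding_paths aH k x2 M)"
proof -
  obtain q y where q: "assoc_fun aH (bpair (\<lambda>_. 0) (cantor_name s)) = Some q" "delta_unit q = Some y"
    using answer_on_path[OF delta_closed_zero AUC_dom_unit assms(1-3)] .
  obtain L where "assoc_digit aH k (bpair (\<lambda>_. 0) (cantor_name s)) L = Some (q k)"
    using assoc_fun_digit[OF q(1)] .
  then have "assoc_digit aH k (bpair (\<lambda>_. 0) (cantor_name s)) (2 * L) = Some (q k)"
    by (rule assoc_digit_mono) simp
  moreover have "\<bar>nu (q k) - y\<bar> \<le> (1/2) ^ k"
    by (rule delta_unit_SomeD(2)[OF q(2)])
  with sep have "(1/2) ^ k < \<bar>nu (q k) - x1\<bar> \<or> (1/2) ^ k < \<bar>nu (q k) - x2\<bar>"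
    by linarith
  ultimately show ?thesis
    unfolding excluding_paths_def by blast
qed

lemma small_unexcluded_region:
  assumes "K (\<lambda>_. 0) = Some r" "delta_nat_tree r = Some (n, T)" "is_tree T"
  obtains i l where "i < 2 ^ Suc n"
    "measure cantor_measure
       ({s. map s [0..<l] \<in> T} - excluding_paths aH (n + 3) (real i / 2 ^ Suc n) l) < (1/2) ^ n"
proof -
  define N :: nat where "N = 2 ^ Suc n"
  define D where "D i = paths T - (\<Union>M. excluding_paths aH (n + 3) (real i / N) M)" for i
  have "disjoint_family_on D {..<N}"
    unfolding disjoint_family_on_def
  proof (intro ballI impI)
    fix i j :: nat assume "i \<noteq> j"
    then have "1 / real N \<le> \<bar>real i / N - real j / N\<bar>"
      by (simp add: N_def diff_divide_distrib[symmetric] divide_right_mono)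
    moreover have "2 * (1/2) ^ (n + 3) < 1 / real N"
      by (simp add: N_def power_add field_simps)
    ultimately have sep: "2 * (1/2) ^ (n + 3) < \<bar>real i / N - real j / N\<bar>"
      by linarith
    show "D i \<inter> D j = {}"
    proof (rule ccontr)
      assume "D i \<inter> D j \<noteq> {}"
      then obtain s where "s \<in> paths T" "s \<in> D i" "s \<in> D j"
        unfolding D_def by blast
      with path_excludes_one_of[OF assms(1,2) _ sep, of s] show False
        unfolding D_def star_WWKL_def by auto
    qed
  qed
  moreover have "D i \<in> sets cantor_measure" for i
    unfolding D_def by (auto intro: sets_cantor_measure_paths sets_excluding_paths)
  ultimately obtain i where i: "i < N" "measure cantor_measure (D i) \<le> 1 / real N"
    using cantor.ex_prob_le_inverse_card[of D N] unfolding N_def by auto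
  define E where "E l = {s. map s [0..<l] \<in> T} - excluding_paths aH (n + 3) (real i / N) l" for l
  have E_sets: "range E \<subseteq> sets cantor_measure"
    unfolding E_def by (auto intro: sets_cantor_measure_prefix sets_excluding_paths)
  have E_dec: "decseq E"
    unfolding decseq_def E_def using tree_prefix[OF assms(3)] excluding_paths_mono by blast
  have E_INT: "(\<Inter>l. E l) = D i"
    unfolding E_def D_def paths_eq_INT by blast
  have "1 / real N < (1/2) ^ n"
    by (simp add: N_def field_simps)
  with i(2) have "measure cantor_measure (\<Inter>l. E l) < (1/2) ^ n"
    unfolding E_INT by linarith
  then obtain l where "measure cantor_measure (E l) < (1/2) ^ n"
    by (rule cantor.ex_prob_less_of_decseq[OF E_sets E_dec])
  with i(1) that show ?thesis
    unfolding E_def N_def by simp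
qed

lemma nearby_instance:
  fixes l :: nat
  assumes "K (\<lambda>_. 0) = Some r" "delta_nat_tree r = Some (n, T)"
  obtains L where "\<forall>p r' n' T'. (\<forall>j<L. p j = 0) \<longrightarrow> K p = Some r' \<longrightarrow>
    delta_nat_tree r' = Some (n', T') \<longrightarrow> n' = n \<and> paths T' \<subseteq> {s. map s [0..<l] \<in> T}"
proof -
  obtain L where L: "\<forall>p r'. (\<forall>i<L. p i = 0) \<longrightarrow> assoc_fun aK p = Some r' \<longrightarrow>
      (\<forall>j<2 ^ (l + 2). r' j = r j)"
    using assoc_fun_continuous[OF K_assoc[OF assms(1)], of "2 ^ (l + 2)"] .
  have "n' = n \<and> paths T' \<subseteq> {s. map s [0..<l] \<in> T}"
    if "\<forall>j<L. p j = 0" "K p = Some r'" and r': "delta_nat_tree r' = Some (n', T')" for p r' n' T'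
  proof -
    from that L K_assoc have agree: "\<forall>j<2 ^ (l + 2). r' j = r j"
      by blast
    have "map s [0..<l] \<in> T" if "s \<in> paths T'" for s
    proof -
      from that have "map s [0..<l] \<in> T'"
        unfolding paths_def by blast
      then show ?thesis
        using delta_nat_tree_prefix(2)[OF assms(2) r' agree] by simp
    qed
    then show ?thesis
      using delta_nat_tree_prefix(1)[OF assms(2) r' agree] by auto
  qed
  then show ?thesis
    by (intro that) blast
qed

lemma inconsistent: False
proof -
  obtain r n T where r: "K (\<lambda>_. 0) = Some r" "delta_nat_tree r = Some (n, T)" "(n, T) \<in> star_WWKL_dom"
    using instance_of_name[OF delta_closed_zero AUC_dom_unit] .
  then have "is_tree T"
    unfolding star_WWKL_dom_def by simp
  obtain i l where i: "i < 2 ^ Suc n" and small: "measure cantor_measure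
      ({s. map s [0..<l] \<in> T} - excluding_paths aH (n + 3) (real i / 2 ^ Suc n) l) < (1/2) ^ n"
    using small_unexcluded_region[OF r(1,2) \<open>is_tree T\<close>] .
  obtain L where L: "\<forall>p r' n' T'. (\<forall>j<L. p j = 0) \<longrightarrow> K p = Some r' \<longrightarrow>
      delta_nat_tree r' = Some (n', T') \<longrightarrow> n' = n \<and> paths T' \<subseteq> {s. map s [0..<l] \<in> T}"
    using nearby_instance[OF r(1,2), where l = l] .
  define c where "c = prod_encode (int_encode (int i), 2 ^ Suc n - 1)"
  have "real i < real (2 ^ Suc n)"
    using i by (simp only: of_nat_less_iff)
  then have c: "nu c = real i / 2 ^ Suc n" "nu c \<in> {0..1}"
    by (simp_all add: c_def nu_prod_encode)
  define M where "M = max l L"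
  have p: "delta_closed (singleton_name M c) = Some {nu c}" "\<forall>j<M. singleton_name M c j = 0"
    using delta_closed_singleton_name[OF c(2)] singleton_name_below by auto
  obtain r' n' T' where r': "K (singleton_name M c) = Some r'" "delta_nat_tree r' = Some (n', T')"
    "(n', T') \<in> star_WWKL_dom"
    using instance_of_name[OF p(1) AUC_dom_singleton[OF c(2)]] .
  have "\<forall>j<L. singleton_name M c j = 0"
    using p(2) unfolding M_def by auto
  with L r'(1,2) have "n' = n" "paths T' \<subseteq> {s. map s [0..<l] \<in> T}"
    by blast+
  have "{s. map s [0..<l] \<in> T} - excluding_paths aH (n + 3) (nu c) l \<in> sets cantor_measure"
    by (intro sets.Diff sets_cantor_measure_prefix sets_excluding_paths)
  moreover have "measure cantor_measure ({s. map s [0..<l] \<in> T} - excluding_paths aH (n + 3) (nu c) l)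
      < measure cantor_measure (paths T')"
    using small c(1) r'(3) \<open>n' = n\<close> unfolding star_WWKL_dom_def by simp
  ultimately obtain s where s: "s \<in> paths T'" "s \<in> excluding_paths aH (n + 3) (nu c) l"
    using cantor.meets_of_measure_diff_less[OF \<open>paths T' \<subseteq> _\<close>] by blast
  have s_M: "s \<in> excluding_paths aH (n + 3) (nu c) M"
    using excluding_paths_mono[of l M] s(2) unfolding M_def by auto
  obtain q y where "assoc_fun aH (bpair (singleton_name M c) (cantor_name s)) = Some q"
    "delta_unit q = Some y" "y \<in> {nu c}"
    using answer_on_path[OF p(1) AUC_dom_singleton[OF c(2)] r'(1,2)] s(1) unfolding star_WWKL_def by auto
  with excluding_paths_excludes[OF s_M p(2)] show False
    by blast
qed

end

lemma no_continuous_reduction: "\<not> continuous_reduction H K aH aK"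
  using continuous_reduction.inconsistent by blast

theorem theorem16p5:
  shows "\<not> weihrauch_le delta_closed delta_unit AUC_dom (\<lambda>A. A)
                        delta_nat_tree delta_cantor star_WWKL_dom star_WWKL"
proof
  assume "weihrauch_le delta_closed delta_unit AUC_dom (\<lambda>A. A)
                        delta_nat_tree delta_cantor star_WWKL_dom star_WWKL"
  then obtain H K where "computable_partial H" "computable_partial K"
    and reduction: "\<forall>G. realizes delta_nat_tree delta_cantor star_WWKL_dom star_WWKL G \<longrightarrow>
      realizes delta_closed delta_unit AUC_dom (\<lambda>A. A)
        (\<lambda>p. case K p of None \<Rightarrow> None
             | Some r \<Rightarrow> (case G r of None \<Rightarrow> None | Some s \<Rightarrow> H (bpair p s)))"
    unfolding weihrauch_le_def by blast
  then obtain aH aK where "\<And>p q. H p = Some q \<Longrightarrow> assoc_fun aH p = Some q"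
    and "\<And>p q. K p = Some q \<Longrightarrow> assoc_fun aK p = Some q"
    by (metis computable_partial_assoc)
  with reduction have "continuous_reduction H K aH aK"
    by unfold_locales blast+
  with no_continuous_reduction show False ..
qed

end
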